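(* Let $A\in\mathbb{C}^{m\times n}$ have rank $r$, $B\in\mathbb{C}^{m\times n}$ have rank $s$, and $E=B-A$. Then $$\|B^{\dagger}-A^{\dagger}\|_{F}^{2}\geq\max\big\{\gamma'_{1}+\|B^{\dagger}EA^{\dagger}\|_{F}^{2},\ \gamma'_{2}+\|A^{\dagger}EB^{\dagger}\|_{F}^{2}\big\},$$ where $$\gamma'_{1}:=\frac{\|A^{\dagger}E\|_{F}^{2}-\|B\|_{2}^{2}\|A^{\dagger}EB^{\dagger}\|_{F}^{2}}{\|A\|_{2}^{2}}+\frac{\|EB^{\dagger}\|_{F}^{2}-\|A\|_{2}^{2}\|A^{\dagger}EB^{\dagger}\|_{F}^{2}}{\|B\|_{2}^{2}},$$ $$\gamma'_{2}:=\frac{\|EA^{\dagger}\|_{F}^{2}-\|B\|_{2}^{2}\|B^{\dagger}EA^{\dagger}\|_{F}^{2}}{\|A\|_{2}^{2}}+\frac{\|B^{\dagger}E\|_{F}^{2}-\|A\|_{2}^{2}\|B^{\dagger}EA^{\dagger}\|_{F}^{2}}{\|B\|_{2}^{2}}.$$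
   Context: $M^{\dagger}$ denotes the Moore–Penrose inverse of $M$, $\|\cdot\|_{2}$ the spectral norm and $\|\cdot\|_{F}$ the Frobenius norm. *)

theory Defs
  imports "HOL-Analysis.Analysis"
begin

definition cadj :: "complex ^ 'n ^ 'm \<Rightarrow> complex ^ 'm ^ 'n" where
  "cadj A = (\<chi> i j. cnj (A $ j $ i))"

definition mp_inverse :: "complex ^ 'n ^ 'm \<Rightarrow> complex ^ 'm ^ 'n" where
  "mp_inverse A = (THE X. A ** X ** A = A \<and> X ** A ** X = X \<and>
                          cadj (A ** X) = A ** X \<and> cadj (X ** A) = X ** A)"

definition spec_norm :: "complex ^ 'n ^ 'm \<Rightarrow> real" where
  "spec_norm A = onorm (\<lambda>x. A *v x)"

definition frob_norm :: "complex ^ 'n ^ 'm \<Rightarrow> real" where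
  "frob_norm A = sqrt (\<Sum>i\<in>UNIV. \<Sum>j\<in>UNIV. (cmod (A $ i $ j))\<^sup>2)"

end

theory Submission
  imports Defs
begin

text \<open>Write \<open>X = A\<^sup>\<dagger>\<close>, \<open>Y = B\<^sup>\<dagger>\<close>, \<open>E = B - A\<close>. Then
  \<open>Y - X = Y (I - A X) - (I - Y B) X - Y E X\<close>, and the Penrose equations make the three terms
  mutually orthogonal for the Frobenius inner product, so \<open>\<parallel>Y - X\<parallel>\<^sub>F\<^sup>2\<close> is the sum of their squared
  norms. Moreover \<open>X E = X E Y B - X A (I - Y B)\<close> is an orthogonal splitting, whence
  \<open>\<parallel>X E\<parallel>\<^sub>F\<^sup>2 \<le> \<parallel>B\<parallel>\<^sub>2\<^sup>2 \<parallel>X E Y\<parallel>\<^sub>F\<^sup>2 + \<parallel>A\<parallel>\<^sub>2\<^sup>2 \<parallel>(I - Y B) X\<parallel>\<^sub>F\<^sup>2\<close>; the adjoint statement bounds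
  \<open>\<parallel>Y (I - A X)\<parallel>\<^sub>F\<close> in the same way. Exchanging \<open>A\<close> and \<open>B\<close> gives the second bound.\<close>

section \<open>Matrix products, conjugate transpose and the Frobenius norm\<close>

lemma matrix_add_rdistrib: "((B::'a::semiring_1^'n^'m) + C) ** A = B ** A + C ** A"
  by (simp add: matrix_matrix_mult_def vec_eq_iff sum.distrib algebra_simps)

lemma matrix_diff_ldistrib: "(A::'a::ring_1^'n^'m) ** (B - C) = A ** B - A ** C"
  by (simp add: matrix_matrix_mult_def vec_eq_iff sum_subtractf algebra_simps)

lemma matrix_diff_rdistrib: "((B::'a::ring_1^'n^'m) - C) ** A = B ** A - C ** A"
  by (simp add: matrix_matrix_mult_def vec_eq_iff sum_subtractf algebra_simps)

lemma matrix_mul_uminus_left: "(- (A::'a::ring_1^'n^'m)) ** B = - (A ** B)"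
  by (simp add: matrix_matrix_mult_def vec_eq_iff sum_negf)

lemma matrix_mul_uminus_right: "(A::'a::ring_1^'n^'m) ** (- B) = - (A ** B)"
  by (simp add: matrix_matrix_mult_def vec_eq_iff sum_negf)

lemma cadj_cadj [simp]: "cadj (cadj M) = M"
  by (simp add: cadj_def vec_eq_iff)

lemma cadj_matrix_mul: "cadj (M ** N) = cadj N ** cadj M"
  by (simp add: cadj_def vec_eq_iff matrix_matrix_mult_def mult.commute)

lemma cadj_add: "cadj (M + N) = cadj M + cadj N"
  by (simp add: cadj_def vec_eq_iff)

lemma cadj_diff: "cadj (M - N) = cadj M - cadj N"
  by (simp add: cadj_def vec_eq_iff)

lemma cadj_scaleR: "cadj (c *\<^sub>R M) = c *\<^sub>R cadj M"
  by (simp add: cadj_def vec_eq_iff)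

lemma cadj_zero [simp]: "cadj 0 = 0"
  by (simp add: cadj_def vec_eq_iff)

lemma cadj_mat_1 [simp]: "cadj (mat 1) = mat 1"
  by (simp add: cadj_def vec_eq_iff mat_def)

lemma inner_complex_eq_Re_mult_cnj: "inner (x::complex) y = Re (x * cnj y)"
  by (simp add: inner_complex_def)

lemma inner_complex_matrix_eq: "inner (X::complex^'n^'m) Y = Re (\<Sum>i\<in>UNIV. \<Sum>j\<in>UNIV. X$i$j * cnj (Y$i$j))"
  by (simp add: inner_vec_def inner_complex_eq_Re_mult_cnj)

lemma inner_matrix_mul_left:
  fixes M :: "complex^'m^'k" and X :: "complex^'p^'m" and Y :: "complex^'p^'k"
  shows "inner (M ** X) Y = inner X (cadj M ** Y)"
proof -
  have "(\<Sum>i\<in>UNIV. \<Sum>j\<in>UNIV. (M ** X)$i$j * cnj (Y$i$j))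
      = (\<Sum>i\<in>UNIV. \<Sum>j\<in>UNIV. \<Sum>l\<in>UNIV. M$i$l * X$l$j * cnj (Y$i$j))"
    by (simp add: matrix_matrix_mult_def sum_distrib_right)
  also have "\<dots> = (\<Sum>i\<in>UNIV. \<Sum>l\<in>UNIV. \<Sum>j\<in>UNIV. M$i$l * X$l$j * cnj (Y$i$j))"
    by (rule sum.cong[OF refl], rule sum.swap)
  also have "\<dots> = (\<Sum>l\<in>UNIV. \<Sum>i\<in>UNIV. \<Sum>j\<in>UNIV. M$i$l * X$l$j * cnj (Y$i$j))"
    by (rule sum.swap)
  also have "\<dots> = (\<Sum>l\<in>UNIV. \<Sum>j\<in>UNIV. \<Sum>i\<in>UNIV. M$i$l * X$l$j * cnj (Y$i$j))"
    by (rule sum.cong[OF refl], rule sum.swap)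
  also have "\<dots> = (\<Sum>l\<in>UNIV. \<Sum>j\<in>UNIV. X$l$j * cnj ((cadj M ** Y)$l$j))"
    by (simp add: matrix_matrix_mult_def cadj_def sum_distrib_left mult_ac)
  finally show ?thesis by (simp add: inner_complex_matrix_eq)
qed

lemma inner_cadj: "inner (cadj X) (cadj (Y::complex^'n^'m)) = inner X Y"
  unfolding inner_complex_matrix_eq by (subst sum.swap) (simp add: cadj_def)

lemma norm_cadj: "norm (cadj X) = norm X"
  by (simp add: norm_eq_sqrt_inner inner_cadj)

lemma frob_norm_eq_norm: "frob_norm A = norm A"
  by (simp add: frob_norm_def norm_vec_def L2_set_def sum_nonneg)

lemma inner_matrix_mul_right:
  fixes M :: "complex^'p^'q" and X :: "complex^'q^'m" and Y :: "complex^'p^'m"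
  shows "inner (X ** M) Y = inner X (Y ** cadj M)"
proof -
  have "inner (X ** M) Y = inner (cadj M ** cadj X) (cadj Y)"
    by (simp add: inner_cadj flip: cadj_matrix_mul)
  also have "\<dots> = inner (cadj X) (cadj (Y ** cadj M))"
    by (simp add: inner_matrix_mul_left cadj_matrix_mul)
  finally show ?thesis by (simp add: inner_cadj)
qed

lemma inner_cadj_matrix_vector_mult:
  fixes M :: "complex^'n^'m"
  shows "inner (cadj M *v y) z = inner y (M *v z)"
proof -
  have "(\<Sum>j\<in>UNIV. (cadj M *v y)$j * cnj (z$j)) = (\<Sum>j\<in>UNIV. \<Sum>i\<in>UNIV. cnj (M$i$j) * y$i * cnj (z$j))"
    by (simp add: matrix_vector_mult_def cadj_def sum_distrib_right)
  also have "\<dots> = (\<Sum>i\<in>UNIV. y$i * cnj ((M *v z)$i))"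
    by (subst sum.swap) (simp add: matrix_vector_mult_def sum_distrib_left mult_ac)
  finally show ?thesis
    unfolding inner_vec_def inner_complex_eq_Re_mult_cnj by (metis Re_sum)
qed

lemma cadj_matrix_mul_self_eq_0:
  assumes "cadj D ** (D::complex^'n^'m) = 0"
  shows "D = 0"
proof -
  have "inner D D = inner (mat 1) (cadj D ** D)"
    by (metis inner_matrix_mul_left matrix_mul_rid)
  then show ?thesis using assms by simp
qed

section \<open>The spectral norm\<close>

lemma norm_matrix_vector_mult_le: "norm (M *v x) \<le> spec_norm M * norm x"
  unfolding spec_norm_def by (rule onorm) simp

lemma spec_norm_nonneg: "0 \<le> spec_norm M"
  unfolding spec_norm_def by (rule onorm_pos_le) simp

lemma spec_norm_cadj_le: "spec_norm (cadj M) \<le> spec_norm M"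
  unfolding spec_norm_def[of "cadj M"]
proof (rule onorm_le)
  fix y
  have "(norm (cadj M *v y))\<^sup>2 = inner y (M *v (cadj M *v y))"
    by (simp add: power2_norm_eq_inner inner_cadj_matrix_vector_mult)
  also have "\<dots> \<le> norm y * norm (M *v (cadj M *v y))"
    by (rule norm_cauchy_schwarz)
  also have "\<dots> \<le> norm y * (spec_norm M * norm (cadj M *v y))"
    by (simp add: mult_left_mono norm_matrix_vector_mult_le)
  finally show "norm (cadj M *v y) \<le> spec_norm M * norm y"
    by (cases "cadj M *v y = 0") (simp_all add: spec_norm_nonneg power2_eq_square mult_ac)
qed

lemma spec_norm_cadj: "spec_norm (cadj M) = spec_norm M"
  using spec_norm_cadj_le[of M] spec_norm_cadj_le[of "cadj M"] by simp

lemma norm_power2_eq_sum_columns: "(norm (Z::complex^'n^'m))\<^sup>2 = (\<Sum>j\<in>UNIV. (norm (column j Z))\<^sup>2)"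
proof -
  have "(norm Z)\<^sup>2 = (\<Sum>i\<in>UNIV. \<Sum>j\<in>UNIV. (cmod (Z$i$j))\<^sup>2)"
    by (simp add: norm_vec_def L2_set_def sum_nonneg)
  also have "\<dots> = (\<Sum>j\<in>UNIV. \<Sum>i\<in>UNIV. (cmod (Z$i$j))\<^sup>2)"
    by (rule sum.swap)
  finally show ?thesis
    by (simp add: norm_vec_def L2_set_def sum_nonneg column_def)
qed

lemma column_matrix_mul: "column j (M ** X) = M *v column j X"
  by (simp add: column_def matrix_matrix_mult_def matrix_vector_mult_def vec_eq_iff)

lemma norm_matrix_mul_le_left: "norm (M ** X) \<le> spec_norm M * norm X"
proof -
  have "(norm (M ** X))\<^sup>2 = (\<Sum>j\<in>UNIV. (norm (M *v column j X))\<^sup>2)"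
    by (simp add: norm_power2_eq_sum_columns column_matrix_mul)
  also have "\<dots> \<le> (\<Sum>j\<in>UNIV. (spec_norm M * norm (column j X))\<^sup>2)"
    by (intro sum_mono power_mono norm_matrix_vector_mult_le) simp
  also have "\<dots> = (spec_norm M * norm X)\<^sup>2"
    by (simp add: norm_power2_eq_sum_columns power_mult_distrib sum_distrib_left)
  finally show ?thesis
    using spec_norm_nonneg[of M] by (simp add: power2_le_iff_abs_le)
qed

lemma norm_matrix_mul_le_right: "norm (X ** M) \<le> norm X * spec_norm M"
proof -
  have "norm (X ** M) = norm (cadj M ** cadj X)"
    by (simp add: norm_cadj flip: cadj_matrix_mul)
  also have "\<dots> \<le> spec_norm M * norm X"
    using norm_matrix_mul_le_left[of "cadj M" "cadj X"] by (simp add: norm_cadj spec_norm_cadj)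
  finally show ?thesis by (simp add: mult.commute)
qed

section \<open>Generalized inverses of Hermitian matrices\<close>

definition hermitian :: "complex^'n^'n \<Rightarrow> bool" where
  "hermitian H \<longleftrightarrow> cadj H = H"

lemma hermitian_cadj_matrix_mul_self: "hermitian (cadj A ** A)"
  by (simp add: hermitian_def cadj_matrix_mul)

fun matrix_pow :: "complex^'n^'n \<Rightarrow> nat \<Rightarrow> complex^'n^'n" where
  "matrix_pow H 0 = mat 1"
| "matrix_pow H (Suc k) = H ** matrix_pow H k"

lemma matrix_pow_add: "matrix_pow H (a + b) = matrix_pow H a ** matrix_pow H b"
  by (induction a) (simp_all add: matrix_mul_assoc)

lemma matrix_pow_Suc2: "matrix_pow H (Suc k) = matrix_pow H k ** H"
  using matrix_pow_add[of H k 1] by simp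

lemma hermitian_matrix_pow: "hermitian H \<Longrightarrow> hermitian (matrix_pow H k)"
  by (induction k) (simp_all add: hermitian_def cadj_matrix_mul flip: matrix_pow_Suc2)

lemma hermitian_mul_cancel:
  assumes "hermitian H" and "H ** (H ** W) = 0"
  shows "H ** W = 0"
proof -
  have "inner (H ** W) (H ** W) = inner W (H ** (H ** W))"
    using assms(1) by (simp add: inner_matrix_mul_left hermitian_def)
  then show ?thesis using assms(2) by simp
qed

lemma hermitian_matrix_pow_mul_cancel:
  assumes "hermitian H" and "matrix_pow H k ** Z = 0"
  shows "H ** Z = 0"
  using assms(2)
proof (induction k arbitrary: Z)
  case 0
  then show ?case by simp
next
  case (Suc k)
  have "matrix_pow H k ** (H ** Z) = 0"
    using Suc.prems by (simp only: matrix_mul_assoc flip: matrix_pow_Suc2)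
  then have "H ** (H ** Z) = 0"
    by (rule Suc.IH)
  then show ?case
    by (rule hermitian_mul_cancel[OF assms(1)])
qed

lemma span_matrix_pow_hermitian_commute:
  assumes "hermitian H" and "R \<in> span (range (matrix_pow H))"
  shows "hermitian R \<and> H ** R = R ** H"
  using assms(2)
proof (induction rule: span_induct)
  case base
  show ?case
    by (auto simp: subspace_def hermitian_def cadj_add cadj_scaleR matrix_add_ldistrib
        matrix_add_rdistrib matrix_scalar_ac simp flip: scalar_matrix_assoc)
next
  case (step R)
  then obtain k where "R = matrix_pow H k" by blast
  then show ?case
    using assms(1) by (simp add: hermitian_matrix_pow flip: matrix_pow_Suc2)
qed

lemma matrix_pow_in_span_higher_powers:
  fixes H :: "complex^'n^'n"
  shows "\<exists>m. matrix_pow H m \<in> span (matrix_pow H ` {Suc m..})"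
proof (rule ccontr)
  assume none: "\<not> ?thesis"
  define S where "S m = matrix_pow H ` {m..}" for m
  have S_Suc: "S m = insert (matrix_pow H m) (S (Suc m))" for m
  proof -
    have "{m..} = insert m {Suc m..}"
      by auto
    then show ?thesis
      by (simp only: S_def image_insert)
  qed
  have dim_S: "dim (S m) = dim (S (Suc m)) + 1" for m
  proof -
    have "dim (S m) = dim (insert (matrix_pow H m) (S (Suc m)))"
      by (simp only: S_Suc[of m])
    then show ?thesis
      using none by (simp add: eucl.dim_insert S_def)
  qed
  have "dim (S 0) = dim (S k) + k" for k
  proof (induction k)
    case (Suc k)
    then show ?case using dim_S[of k] by simp
  qed simp
  then have "Suc DIM(complex^'n^'n) \<le> dim (S 0)"
    by (metis le_add2)
  then show False
    using eucl.dim_subset_UNIV[of "S 0"] by simp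
qed

text \<open>A Fitting-type argument: \<open>H\<^sup>m = H\<^sup>m\<^sup>+\<^sup>1 R\<close> with \<open>R\<close> a polynomial in \<open>H\<close>, and
  for Hermitian \<open>H\<close> the factor \<open>H\<^sup>m\<close> cancels to \<open>H = H\<^sup>2 R\<close>.\<close>

lemma hermitian_exists_commuting_square_inverse:
  assumes "hermitian H"
  shows "\<exists>R. hermitian R \<and> H ** R = R ** H \<and> H ** H ** R = H"
proof -
  obtain m where m: "matrix_pow H m \<in> span (matrix_pow H ` {Suc m..})"
    using matrix_pow_in_span_higher_powers by blast
  have lin: "linear (\<lambda>R. matrix_pow H (Suc m) ** R)"
    by (rule linearI) (simp_all add: matrix_add_ldistrib matrix_scalar_ac flip: scalar_matrix_assoc)
  have "{Suc m..} = range ((+) (Suc m))"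
    using image_add_atLeast[of "Suc m" 0] by simp
  then have "matrix_pow H ` {Suc m..} = (\<lambda>R. matrix_pow H (Suc m) ** R) ` range (matrix_pow H)"
    by (simp add: image_image matrix_pow_add matrix_mul_assoc)
  then have "span (matrix_pow H ` {Suc m..}) = (\<lambda>R. matrix_pow H (Suc m) ** R) ` span (range (matrix_pow H))"
    by (simp only: linear_span_image[OF lin])
  then obtain R where R: "R \<in> span (range (matrix_pow H))"
    and pow_eq: "matrix_pow H m = matrix_pow H (Suc m) ** R"
    using m by auto
  have "matrix_pow H m ** (mat 1 - H ** R) = matrix_pow H m - matrix_pow H (Suc m) ** R"
    by (simp only: matrix_diff_ldistrib matrix_mul_rid matrix_mul_assoc matrix_pow_Suc2)
  also have "\<dots> = 0"
    by (simp only: pow_eq[symmetric] diff_self)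
  finally have "H ** (mat 1 - H ** R) = 0"
    by (rule hermitian_matrix_pow_mul_cancel[OF assms])
  then have "H - H ** H ** R = 0"
    by (simp only: matrix_diff_ldistrib matrix_mul_rid matrix_mul_assoc)
  then have "H ** H ** R = H"
    by (metis right_minus_eq)
  then show ?thesis
    using span_matrix_pow_hermitian_commute[OF assms R] by blast
qed

lemma hermitian_generalized_inverse:
  assumes "hermitian H"
  shows "\<exists>G. hermitian G \<and> G ** H = H ** G \<and> H ** G ** H = H \<and> G ** H ** G = G"
proof -
  obtain R where herm_R: "hermitian R" and comm_R: "H ** R = R ** H" and HHR: "H ** H ** R = H"
    using hermitian_exists_commuting_square_inverse[OF assms] by blast
  have HRH: "H ** R ** H = H"
  proof -
    have "H ** R ** H = H ** (R ** H)" by (simp only: matrix_mul_assoc)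
    also have "\<dots> = H ** H ** R" by (simp only: comm_R[symmetric] matrix_mul_assoc)
    finally show ?thesis using HHR by simp
  qed
  define G where "G = R ** H ** R"
  have "hermitian G"
    using assms herm_R by (simp add: G_def hermitian_def cadj_matrix_mul matrix_mul_assoc)
  moreover have "G ** H = H ** G"
  proof -
    have "G ** H = (R ** H) ** (R ** H)" by (simp add: G_def matrix_mul_assoc)
    also have "\<dots> = (H ** R) ** (H ** R)" by (simp only: comm_R)
    also have "\<dots> = H ** G" by (simp add: G_def matrix_mul_assoc)
    finally show ?thesis .
  qed
  moreover have "H ** G ** H = H"
    by (simp add: G_def matrix_mul_assoc HRH)
  moreover have "G ** H ** G = G"
  proof -
    have "G ** H ** G = R ** (H ** R ** H) ** R ** H ** R" by (simp add: G_def matrix_mul_assoc)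
    also have "\<dots> = R ** H ** R ** H ** R" by (simp only: HRH)
    also have "\<dots> = R ** (H ** R ** H) ** R" by (simp only: matrix_mul_assoc)
    finally show ?thesis by (simp only: HRH G_def)
  qed
  ultimately show ?thesis by blast
qed

section \<open>The Penrose equations\<close>

definition penrose :: "complex^'n^'m \<Rightarrow> complex^'m^'n \<Rightarrow> bool" where
  "penrose A X \<longleftrightarrow> A ** X ** A = A \<and> X ** A ** X = X \<and> hermitian (A ** X) \<and> hermitian (X ** A)"

lemma penrose_cadj:
  assumes "penrose A X"
  shows "penrose (cadj A) (cadj X)"
proof -
  have "A ** X ** A = A" and "X ** A ** X = X"
    and "cadj (A ** X) = A ** X" and "cadj (X ** A) = X ** A"
    using assms unfolding penrose_def hermitian_def by auto
  then show ?thesis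
    unfolding penrose_def hermitian_def by (metis cadj_cadj cadj_matrix_mul matrix_mul_assoc)
qed

lemma cadj_mul_self_generalized_inverse_cancel:
  assumes "hermitian G" and HGH: "cadj A ** A ** G ** (cadj A ** A) = cadj A ** A"
  shows "A ** G ** (cadj A ** A) = A"
proof -
  define H where "H = cadj A ** A"
  define D where "D = A ** G ** H - A"
  have cadj_D: "cadj D = H ** G ** cadj A - cadj A"
    using assms(1) by (simp add: D_def H_def hermitian_def cadj_diff cadj_matrix_mul matrix_mul_assoc)
  have "cadj D ** D = H ** G ** H ** G ** H - H ** G ** H - (H ** G ** H - H)"
    unfolding cadj_D unfolding D_def by (simp add: H_def matrix_diff_ldistrib matrix_diff_rdistrib matrix_mul_assoc)
  also have "\<dots> = 0"
    using HGH by (simp flip: H_def)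
  finally have "D = 0"
    by (rule cadj_matrix_mul_self_eq_0)
  then show ?thesis
    by (simp add: D_def H_def)
qed

text \<open>The Moore--Penrose inverse is \<open>G A\<^sup>*\<close> for a Hermitian generalized inverse \<open>G\<close> of
  \<open>A\<^sup>* A\<close> commuting with it.\<close>

lemma penrose_exists: "\<exists>X. penrose A X"
proof -
  define H where "H = cadj A ** A"
  obtain G where herm_G: "hermitian G" and comm: "G ** H = H ** G"
    and HGH: "H ** G ** H = H" and GHG: "G ** H ** G = G"
    using hermitian_generalized_inverse[OF hermitian_cadj_matrix_mul_self[of A]]
    unfolding H_def by blast
  have AGH: "A ** G ** H = A"
    using cadj_mul_self_generalized_inverse_cancel[OF herm_G] HGH by (simp add: H_def)
  define X where "X = G ** cadj A"
  have "A ** X ** A = A"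
    using AGH by (simp add: X_def H_def matrix_mul_assoc)
  moreover have "X ** A ** X = X"
    using GHG by (simp add: X_def H_def matrix_mul_assoc)
  moreover have "hermitian (A ** X)"
    using herm_G by (simp add: X_def hermitian_def cadj_matrix_mul matrix_mul_assoc)
  moreover have "hermitian (X ** A)"
    using herm_G comm by (simp add: X_def H_def hermitian_def cadj_matrix_mul matrix_mul_assoc)
  ultimately show ?thesis
    unfolding penrose_def by blast
qed

lemma penrose_unique:
  assumes "penrose A X" and "penrose A Y"
  shows "X = Y"
proof -
  have x1: "A ** X ** A = A" and x2: "X ** A ** X = X"
    and x3: "cadj (A ** X) = A ** X" and x4: "cadj (X ** A) = X ** A"
    using assms(1) unfolding penrose_def hermitian_def by auto
  have y1: "A ** Y ** A = A" and y2: "Y ** A ** Y = Y"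
    and y3: "cadj (A ** Y) = A ** Y" and y4: "cadj (Y ** A) = Y ** A"
    using assms(2) unfolding penrose_def hermitian_def by auto
  have "X = X ** cadj X ** cadj A"
    using x2 x3 by (metis cadj_matrix_mul matrix_mul_assoc)
  also have "\<dots> = X ** cadj X ** cadj A ** cadj Y ** cadj A"
    using y1 by (metis cadj_matrix_mul matrix_mul_assoc)
  also have "\<dots> = X ** A ** Y"
    using x2 x3 y3 by (metis cadj_matrix_mul matrix_mul_assoc)
  finally have X_eq: "X = X ** A ** Y" .
  have "Y = cadj A ** cadj Y ** Y"
    using y2 y4 by (metis cadj_matrix_mul matrix_mul_assoc)
  also have "\<dots> = cadj A ** cadj X ** cadj A ** cadj Y ** Y"
    using x1 by (metis cadj_matrix_mul matrix_mul_assoc)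
  also have "\<dots> = X ** A ** Y"
    using y2 x4 y4 by (metis cadj_matrix_mul matrix_mul_assoc)
  finally show ?thesis
    using X_eq by simp
qed

lemma penrose_mp_inverse: "penrose A (mp_inverse A)"
proof -
  have "\<exists>!X. penrose A X"
    using penrose_exists penrose_unique by blast
  then show ?thesis
    unfolding mp_inverse_def penrose_def hermitian_def by (rule theI')
qed

section \<open>Perturbation bounds\<close>

lemma norm_diff_diff_Pythagorean:
  fixes a b c :: "'a::real_inner"
  assumes "orthogonal a b" and "orthogonal a c" and "orthogonal b c"
  shows "(norm (a - b - c))\<^sup>2 = (norm a)\<^sup>2 + (norm b)\<^sup>2 + (norm c)\<^sup>2"
  using assms by (simp add: orthogonal_def power2_norm_eq_inner inner_diff_left inner_diff_right inner_commute)

lemma power2_le_mult_power2: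
  fixes a b c :: real
  assumes "0 \<le> a" and "a \<le> b * c"
  shows "a\<^sup>2 \<le> b\<^sup>2 * c\<^sup>2"
  using power_mono[OF assms(2,1)] by (simp add: power_mult_distrib)

lemma orthogonal_hermitian_mul_left:
  assumes "hermitian P" and "P ** T = 0"
  shows "orthogonal (P ** S) T"
  using assms by (simp add: orthogonal_def inner_matrix_mul_left hermitian_def)

lemma orthogonal_hermitian_mul_right:
  assumes "hermitian Q" and "T ** Q = 0"
  shows "orthogonal (S ** Q) T"
  using assms by (simp add: orthogonal_def inner_matrix_mul_right hermitian_def)

lemma penrose_idempotent:
  assumes "penrose A X"
  shows "A ** X ** (A ** X) = A ** X" and "X ** A ** (X ** A) = X ** A"
  using assms unfolding penrose_def by (simp_all add: matrix_mul_assoc)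

text \<open>\<open>P = Y B\<close> and \<open>Q = A X\<close> are the orthogonal projections onto the ranges of \<open>Y\<close> and
  \<open>A\<close>: \<open>P\<close> fixes \<open>T1\<close> and \<open>T3\<close> from the left but kills \<open>T2\<close>, while \<open>Q\<close> kills \<open>T1\<close>
  from the right but fixes \<open>T3\<close>.\<close>

lemma penrose_diff_norm_power2:
  assumes "penrose A X" and "penrose B Y"
  shows "(norm (Y - X))\<^sup>2 = (norm (Y ** (mat 1 - A ** X)))\<^sup>2 + (norm ((mat 1 - Y ** B) ** X))\<^sup>2
           + (norm (Y ** (B - A) ** X))\<^sup>2"
proof -
  define P where "P = Y ** B"
  define Q where "Q = A ** X"
  define T1 where "T1 = Y ** (mat 1 - Q)"
  define T2 where "T2 = (mat 1 - P) ** X"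
  define T3 where "T3 = Y ** (B - A) ** X"
  have herm: "hermitian P" "hermitian Q"
    using assms unfolding penrose_def P_def Q_def by auto
  have PY: "P ** Y = Y" and XQ: "X ** Q = X"
    using assms unfolding penrose_def P_def Q_def by (simp_all add: matrix_mul_assoc)
  have PP: "P ** P = P" and QQ: "Q ** Q = Q"
    using penrose_idempotent assms unfolding P_def Q_def by blast+
  have "Y - X = T1 - T2 - T3"
    using PY by (simp add: T1_def T2_def T3_def P_def Q_def matrix_diff_ldistrib matrix_diff_rdistrib
        matrix_mul_assoc)
  moreover have "orthogonal T1 T2"
  proof -
    have "P ** T1 = T1" using PY by (simp add: T1_def matrix_mul_assoc)
    moreover have "P ** T2 = 0" using PP by (simp add: T2_def matrix_diff_ldistrib matrix_mul_assoc)
    ultimately show ?thesis using orthogonal_hermitian_mul_left[OF herm(1)] by metis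
  qed
  moreover have "orthogonal T1 T3"
  proof -
    have "T1 ** Q = 0" using QQ by (simp add: T1_def matrix_diff_rdistrib matrix_diff_ldistrib flip: matrix_mul_assoc)
    then have "orthogonal T3 T1"
      using orthogonal_hermitian_mul_right[OF herm(2)] XQ by (metis T3_def matrix_mul_assoc)
    then show ?thesis by (simp add: orthogonal_commute)
  qed
  moreover have "orthogonal T2 T3"
  proof -
    have "P ** T3 = T3" using PY by (simp add: T3_def matrix_mul_assoc)
    moreover have "P ** T2 = 0" using PP by (simp add: T2_def matrix_diff_ldistrib matrix_mul_assoc)
    ultimately have "orthogonal T3 T2" using orthogonal_hermitian_mul_left[OF herm(1)] by metis
    then show ?thesis by (simp add: orthogonal_commute)
  qed
  ultimately show ?thesis
    by (simp add: norm_diff_diff_Pythagorean T1_def T2_def T3_def P_def Q_def)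
qed

text \<open>Split \<open>X E = X E P + X E (I - P)\<close>; since \<open>B (I - P) = 0\<close>, the second summand is
  \<open>-X A (I - P)\<close>, the adjoint of \<open>-(I - P) X A\<close>.\<close>

lemma penrose_perturbation_left_bound:
  assumes "penrose A X" and "penrose B Y"
  shows "(norm (X ** (B - A)))\<^sup>2
           \<le> (spec_norm B)\<^sup>2 * (norm (X ** (B - A) ** Y))\<^sup>2
             + (spec_norm A)\<^sup>2 * (norm ((mat 1 - Y ** B) ** X))\<^sup>2"
proof -
  define E where "E = B - A"
  define P where "P = Y ** B"
  have herm: "hermitian P" "hermitian (X ** A)"
    using assms unfolding penrose_def P_def by auto
  have PP: "P ** P = P"
    using penrose_idempotent(2)[OF assms(2)] by (simp add: P_def)
  have BP: "B ** (mat 1 - P) = 0"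
    using assms(2) by (simp add: penrose_def P_def matrix_diff_ldistrib matrix_mul_assoc)
  have split: "X ** E = X ** E ** P + X ** E ** (mat 1 - P)"
    by (simp add: matrix_diff_ldistrib)
  have "orthogonal (X ** E ** P) (X ** E ** (mat 1 - P))"
    using PP by (intro orthogonal_hermitian_mul_right[OF herm(1)])
      (simp add: matrix_diff_ldistrib matrix_diff_rdistrib flip: matrix_mul_assoc)
  then have "(norm (X ** E))\<^sup>2 = (norm (X ** E ** P))\<^sup>2 + (norm (X ** E ** (mat 1 - P)))\<^sup>2"
    by (metis split norm_add_Pythagorean)
  moreover have "(norm (X ** E ** P))\<^sup>2 \<le> (spec_norm B)\<^sup>2 * (norm (X ** E ** Y))\<^sup>2"
    using norm_matrix_mul_le_right[of "X ** E ** Y" B]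
    by (intro power2_le_mult_power2) (simp_all add: P_def matrix_mul_assoc mult.commute)
  moreover have "(norm (X ** E ** (mat 1 - P)))\<^sup>2 \<le> (spec_norm A)\<^sup>2 * (norm ((mat 1 - P) ** X))\<^sup>2"
  proof (rule power2_le_mult_power2)
    have "X ** E ** (mat 1 - P) = - (X ** A ** (mat 1 - P))"
      using BP by (simp add: E_def matrix_diff_rdistrib matrix_diff_ldistrib flip: matrix_mul_assoc)
    also have "\<dots> = - cadj ((mat 1 - P) ** X ** A)"
      using herm by (simp add: hermitian_def cadj_matrix_mul cadj_diff matrix_mul_assoc)
    finally show "norm (X ** E ** (mat 1 - P)) \<le> spec_norm A * norm ((mat 1 - P) ** X)"
      using norm_matrix_mul_le_right[of "(mat 1 - P) ** X" A] by (simp add: norm_cadj mult.commute)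
  qed simp
  ultimately show ?thesis
    unfolding E_def P_def by linarith
qed

lemma penrose_perturbation_right_bound:
  assumes "penrose A X" and "penrose B Y"
  shows "(norm ((B - A) ** Y))\<^sup>2
           \<le> (spec_norm A)\<^sup>2 * (norm (X ** (B - A) ** Y))\<^sup>2
             + (spec_norm B)\<^sup>2 * (norm (Y ** (mat 1 - A ** X)))\<^sup>2"
proof -
  have "(norm (cadj Y ** (cadj A - cadj B)))\<^sup>2
          \<le> (spec_norm (cadj A))\<^sup>2 * (norm (cadj Y ** (cadj A - cadj B) ** cadj X))\<^sup>2
            + (spec_norm (cadj B))\<^sup>2 * (norm ((mat 1 - cadj X ** cadj A) ** cadj Y))\<^sup>2"
    using penrose_perturbation_left_bound[OF penrose_cadj[OF assms(2)] penrose_cadj[OF assms(1)]] .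
  moreover have "cadj Y ** (cadj A - cadj B) = - cadj ((B - A) ** Y)"
    by (simp add: cadj_matrix_mul cadj_diff matrix_diff_ldistrib)
  moreover have "cadj Y ** (cadj A - cadj B) ** cadj X = - cadj (X ** (B - A) ** Y)"
    by (simp add: cadj_matrix_mul cadj_diff matrix_diff_ldistrib matrix_diff_rdistrib matrix_mul_assoc)
  moreover have "(mat 1 - cadj X ** cadj A) ** cadj Y = cadj (Y ** (mat 1 - A ** X))"
    by (simp add: cadj_matrix_mul cadj_diff)
  ultimately show ?thesis
    by (simp add: norm_cadj spec_norm_cadj)
qed

text \<open>The case \<open>a = 0\<close> (\<open>A = 0\<close> or \<open>B = 0\<close> below) holds because \<open>c / 0 = 0\<close>.\<close>

lemma divide_le_of_le_mult:
  fixes a c t :: real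
  assumes "c \<le> a * t" and "0 \<le> a" and "0 \<le> t"
  shows "c / a \<le> t"
  using assms by (cases "a = 0") (simp_all add: pos_divide_le_eq mult.commute)

lemma penrose_diff_lower_bound:
  assumes "penrose A X" and "penrose B Y"
  shows "((norm (X ** (B - A)))\<^sup>2 - (spec_norm B)\<^sup>2 * (norm (X ** (B - A) ** Y))\<^sup>2) / (spec_norm A)\<^sup>2
       + ((norm ((B - A) ** Y))\<^sup>2 - (spec_norm A)\<^sup>2 * (norm (X ** (B - A) ** Y))\<^sup>2) / (spec_norm B)\<^sup>2
       + (norm (Y ** (B - A) ** X))\<^sup>2
       \<le> (norm (Y - X))\<^sup>2"
proof -
  have "((norm (X ** (B - A)))\<^sup>2 - (spec_norm B)\<^sup>2 * (norm (X ** (B - A) ** Y))\<^sup>2) / (spec_norm A)\<^sup>2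
          \<le> (norm ((mat 1 - Y ** B) ** X))\<^sup>2"
    using penrose_perturbation_left_bound[OF assms] by (intro divide_le_of_le_mult) simp_all
  moreover have "((norm ((B - A) ** Y))\<^sup>2 - (spec_norm A)\<^sup>2 * (norm (X ** (B - A) ** Y))\<^sup>2) / (spec_norm B)\<^sup>2
          \<le> (norm (Y ** (mat 1 - A ** X)))\<^sup>2"
    using penrose_perturbation_right_bound[OF assms] by (intro divide_le_of_le_mult) simp_all
  ultimately show ?thesis
    using penrose_diff_norm_power2[OF assms] by linarith
qed

theorem corollary3p8:
  fixes A B :: "complex ^ 'n ^ 'm"
  defines "E \<equiv> B - A"
  defines "\<gamma>1 \<equiv> ((frob_norm (mp_inverse A ** E))\<^sup>2
                    - (spec_norm B)\<^sup>2 * (frob_norm (mp_inverse A ** E ** mp_inverse B))\<^sup>2)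
                   / (spec_norm A)\<^sup>2
                 + ((frob_norm (E ** mp_inverse B))\<^sup>2
                    - (spec_norm A)\<^sup>2 * (frob_norm (mp_inverse A ** E ** mp_inverse B))\<^sup>2)
                   / (spec_norm B)\<^sup>2"
  defines "\<gamma>2 \<equiv> ((frob_norm (E ** mp_inverse A))\<^sup>2
                    - (spec_norm B)\<^sup>2 * (frob_norm (mp_inverse B ** E ** mp_inverse A))\<^sup>2)
                   / (spec_norm A)\<^sup>2
                 + ((frob_norm (mp_inverse B ** E))\<^sup>2
                    - (spec_norm A)\<^sup>2 * (frob_norm (mp_inverse B ** E ** mp_inverse A))\<^sup>2)
                   / (spec_norm B)\<^sup>2"
  shows "(frob_norm (mp_inverse B - mp_inverse A))\<^sup>2 \<ge>
           max (\<gamma>1 + (frob_norm (mp_inverse B ** E ** mp_inverse A))\<^sup>2)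
               (\<gamma>2 + (frob_norm (mp_inverse A ** E ** mp_inverse B))\<^sup>2)"
proof -
  have "\<gamma>1 + (frob_norm (mp_inverse B ** E ** mp_inverse A))\<^sup>2
          \<le> (frob_norm (mp_inverse B - mp_inverse A))\<^sup>2"
    using penrose_diff_lower_bound[OF penrose_mp_inverse penrose_mp_inverse, of A B]
    by (simp add: \<gamma>1_def E_def frob_norm_eq_norm)
  moreover have "\<gamma>2 + (frob_norm (mp_inverse A ** E ** mp_inverse B))\<^sup>2
          \<le> (frob_norm (mp_inverse B - mp_inverse A))\<^sup>2"
  proof -
    have "A - B = - E"
      by (simp add: E_def)
    then show ?thesis
      using penrose_diff_lower_bound[OF penrose_mp_inverse penrose_mp_inverse, of B A]
      by (simp add: \<gamma>2_def frob_norm_eq_norm norm_minus_commute matrix_mul_uminus_left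
          matrix_mul_uminus_right)
  qed
  ultimately show ?thesis
    by simp
qed

end
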